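(* Let $g_1,\dots,g_r\in\mathbb R[X_1,\dots,X_n]$ and $r_0>0$ with $r_0^2-\|\mathbf X\|_2^2\in\mathcal Q_{\ell_0}(\mathbf g)$. Then for all $t\in\mathbb N$ and $\ell\ge 2t-2+\ell_0$, every $L\in\mathcal L^{(1)}_\ell(\mathbf g)$ satisfies $$\|L^{[2t]}\|_2\le\sqrt{\binom{n+t}{t}}\ \sum_{k=0}^t r_0^{2k}.$$
   Context: $\Sigma^2$ sums of squares; $\mathcal Q_\ell(\mathbf g)=\{s_0+\sum_is_ig_i: s_j\in\Sigma^2,\deg s_0\le\ell,\deg(s_ig_i)\le\ell\}$; $\|\mathbf X\|_2^2=\sum X_i^2$. $\mathcal L^{(1)}_\ell(\mathbf g)=\{L$ linear functional on $\mathbb R[\mathbf X]_\ell$ (polynomials of degree $\le\ell$) with $L(q)\ge0$ for all $q\in\mathcal Q_\ell(\mathbf g)$ and $L(1)=1\}$. $L^{[2t]}$ is the restriction of $L$ to $\mathbb R[\mathbf X]_{2t}$, identified with the vector $(L(\mathbf X^\alpha))_{|\alpha|\le2t}$, and $\|\cdot\|_2$ is its Euclidean norm. (The paper writes $r$ for $r_0$.) *)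

theory Defs
  imports Complex_Main "HOL-Library.Poly_Mapping"
begin

text \<open>Real polynomials: finitely supported maps from exponent vectors
  (finitely supported nat \<Rightarrow> nat) to coefficients; multiplication is convolution.\<close>

type_synonym monom = "nat \<Rightarrow>\<^sub>0 nat"
type_synonym mpoly = "monom \<Rightarrow>\<^sub>0 real"

definition mdeg :: "monom \<Rightarrow> nat" where
  "mdeg \<alpha> = (\<Sum>i\<in>Poly_Mapping.keys \<alpha>. Poly_Mapping.lookup \<alpha> i)"

definition tdeg :: "mpoly \<Rightarrow> nat" where
  "tdeg p = Max (insert 0 (mdeg ` Poly_Mapping.keys p))"

text \<open>Monomials in the variables X_0..X_{n-1} (i.e. X_1..X_n) of degree at most d.\<close>
definition mons :: "nat \<Rightarrow> nat \<Rightarrow> monom set" where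
  "mons n d = {\<alpha>. Poly_Mapping.keys \<alpha> \<subseteq> {..<n} \<and> mdeg \<alpha> \<le> d}"

definition in_vars :: "nat \<Rightarrow> mpoly \<Rightarrow> bool" where
  "in_vars n p \<longleftrightarrow> (\<forall>\<alpha>\<in>Poly_Mapping.keys p. Poly_Mapping.keys \<alpha> \<subseteq> {..<n})"

definition const :: "real \<Rightarrow> mpoly" where
  "const c = Poly_Mapping.single 0 c"

definition var :: "nat \<Rightarrow> mpoly" where
  "var i = Poly_Mapping.single (Poly_Mapping.single i 1) 1"

definition sq_norm_poly :: "nat \<Rightarrow> mpoly" where
  "sq_norm_poly n = (\<Sum>i<n. var i * var i)"

definition SOS :: "nat \<Rightarrow> mpoly set" where
  "SOS n = {s. \<exists>qs. (\<forall>q\<in>set qs. in_vars n q) \<and> s = sum_list (map (\<lambda>q. q * q) qs)}"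

definition Qmod :: "nat \<Rightarrow> nat \<Rightarrow> (nat \<Rightarrow> mpoly) \<Rightarrow> nat \<Rightarrow> mpoly set" where
  "Qmod n r g l = {p. \<exists>s0 s. s0 \<in> SOS n \<and> tdeg s0 \<le> l \<and>
      (\<forall>i\<in>{1..r}. s i \<in> SOS n \<and> tdeg (s i * g i) \<le> l) \<and>
      p = s0 + (\<Sum>i=1..r. s i * g i)}"

text \<open>A linear functional on R[X]_l, given by its values on the monomial basis
  (values outside the basis mons n l are 0).\<close>
definition apply_lf :: "(monom \<Rightarrow> real) \<Rightarrow> mpoly \<Rightarrow> real" where
  "apply_lf L p = (\<Sum>\<alpha>\<in>Poly_Mapping.keys p. Poly_Mapping.lookup p \<alpha> * L \<alpha>)"

definition Lset1 :: "nat \<Rightarrow> nat \<Rightarrow> (nat \<Rightarrow> mpoly) \<Rightarrow> nat \<Rightarrow> (monom \<Rightarrow> real) set" where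
  "Lset1 n r g l = {L. (\<forall>\<alpha>. \<alpha> \<notin> mons n l \<longrightarrow> L \<alpha> = 0) \<and>
      (\<forall>q\<in>Qmod n r g l. apply_lf L q \<ge> 0) \<and> apply_lf L 1 = 1}"

definition trunc_norm :: "nat \<Rightarrow> nat \<Rightarrow> (monom \<Rightarrow> real) \<Rightarrow> real" where
  "trunc_norm n d L = sqrt (\<Sum>\<alpha>\<in>mons n d. (L \<alpha>)\<^sup>2)"

end

theory Submission
  imports Defs
begin

(* Let M be the monomials of degree at most t and T = sum of L(X^(2b)) over b in M.
   Every monomial of degree at most 2t is a product X^b X^c with b, c in M, and positivity of L
   on squares gives the Cauchy-Schwarz inequality L(X^(b+c))^2 <= L(X^(2b)) L(X^(2c)); hence
   ||L^[2t]||^2 <= T^2. The coefficient of X^(2b) in ||X||^(2|b|) is a multinomial coefficient,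
   so at least 1, and therefore sum_(k<=t) ||X||^(2k) - sum_(b in M) X^(2b) has nonnegative
   coefficients supported on squares: it is a sum of squares and T <= sum_(k<=t) L(||X||^(2k)).
   Finally ||X||^(2k) (r0^2 - ||X||^2) lies in Q_l for k < t, so L(||X||^(2k)) <= r0^(2k) by
   induction on k. This proves the bound even without the factor sqrt (binomial (n+t) t), and
   without using that the g_i involve only X_1..X_n or that r0 > 0. *)

lemma mpoly_eq_sum_single:
  "(p::mpoly) = (\<Sum>a\<in>Poly_Mapping.keys p. Poly_Mapping.single a (Poly_Mapping.lookup p a))"
proof (rule poly_mapping_eqI)
  fix k
  show "Poly_Mapping.lookup p k =
    Poly_Mapping.lookup (\<Sum>a\<in>Poly_Mapping.keys p. Poly_Mapping.single a (Poly_Mapping.lookup p a)) k"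
    by (simp add: lookup_sum lookup_single when_def sum.delta in_keys_iff)
qed

lemma lookup_mult_mpoly:
  "Poly_Mapping.lookup ((p::mpoly) * q) m =
    (\<Sum>a\<in>Poly_Mapping.keys p. \<Sum>b\<in>Poly_Mapping.keys q.
       Poly_Mapping.lookup p a * Poly_Mapping.lookup q b when a + b = m)"
proof -
  have "p * q = (\<Sum>a\<in>Poly_Mapping.keys p. \<Sum>b\<in>Poly_Mapping.keys q.
      Poly_Mapping.single (a + b) (Poly_Mapping.lookup p a * Poly_Mapping.lookup q b))"
    by (subst (1 2) mpoly_eq_sum_single) (simp add: sum_product mult_single)
  then show ?thesis
    by (simp add: lookup_sum lookup_single when_def eq_commute)
qed

lemma lookup_single_mult:
  "Poly_Mapping.lookup (Poly_Mapping.single a c * (p::mpoly)) (a + x) = c * Poly_Mapping.lookup p x"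
  by (cases "c = 0") (simp_all add: lookup_mult_mpoly when_def sum.delta in_keys_iff cong: if_cong)

lemma lookup_const_mult: "Poly_Mapping.lookup (const c * p) x = c * Poly_Mapping.lookup p x"
  using lookup_single_mult[of 0 c p x] by (simp add: const_def)

lemma apply_lf_superset:
  "finite S \<Longrightarrow> Poly_Mapping.keys p \<subseteq> S \<Longrightarrow>
    apply_lf L p = (\<Sum>a\<in>S. Poly_Mapping.lookup p a * L a)"
  unfolding apply_lf_def by (rule sum.mono_neutral_left) (auto simp: in_keys_iff)

lemma apply_lf_add: "apply_lf L (p + q) = apply_lf L p + apply_lf L q"
  unfolding apply_lf_def by (rule setsum_keys_plus_distrib) (simp_all add: distrib_right)

lemma apply_lf_diff: "apply_lf L (p - q) = apply_lf L p - apply_lf L q"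
  using apply_lf_add[of L "p - q" q] by simp

lemma apply_lf_sum: "apply_lf L (sum f A) = (\<Sum>i\<in>A. apply_lf L (f i))"
proof (induction A rule: infinite_finite_induct)
  case (insert x F)
  then show ?case by (simp add: apply_lf_add)
qed (simp_all add: apply_lf_def)

lemma apply_lf_single: "apply_lf L (Poly_Mapping.single a c) = c * L a"
  by (simp add: apply_lf_def)

lemma apply_lf_const_mult: "apply_lf L (const c * p) = c * apply_lf L p"
proof -
  have "apply_lf L (const c * p) =
      (\<Sum>a\<in>Poly_Mapping.keys p. Poly_Mapping.lookup (const c * p) a * L a)"
    by (rule apply_lf_superset) (auto simp: in_keys_iff lookup_const_mult)
  then show ?thesis
    by (simp add: apply_lf_def lookup_const_mult sum_distrib_left mult.assoc)
qed

lemma mdeg_add: "mdeg (\<alpha> + \<beta>) = mdeg \<alpha> + mdeg \<beta>"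
  unfolding mdeg_def by (rule setsum_keys_plus_distrib) simp_all

lemma mdeg_zero [simp]: "mdeg 0 = 0"
  by (simp add: mdeg_def)

lemma mdeg_single [simp]: "mdeg (Poly_Mapping.single i k) = k"
  by (simp add: mdeg_def)

lemma lookup_le_mdeg: "Poly_Mapping.lookup \<alpha> i \<le> mdeg \<alpha>"
proof (cases "i \<in> Poly_Mapping.keys \<alpha>")
  case True
  then show ?thesis unfolding mdeg_def by (intro member_le_sum) auto
qed (simp add: in_keys_iff)

lemma mdeg_eq_0_iff: "mdeg \<alpha> = 0 \<longleftrightarrow> \<alpha> = 0"
  using lookup_le_mdeg[of \<alpha>] by (auto intro!: poly_mapping_eqI simp: mdeg_def)

lemma keys_add_monom:
  "Poly_Mapping.keys ((\<alpha>::monom) + \<beta>) = Poly_Mapping.keys \<alpha> \<union> Poly_Mapping.keys \<beta>"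
  by (auto simp: in_keys_iff lookup_add)

lemma monom_remove_var:
  assumes "i \<in> Poly_Mapping.keys (\<alpha>::monom)"
  shows "\<alpha> = Poly_Mapping.single i 1 + (\<alpha> - Poly_Mapping.single i 1)"
  using assms by (auto intro!: poly_mapping_eqI simp: lookup_add lookup_minus lookup_single when_def in_keys_iff)

lemma double_monom_eq_iff [simp]: "(\<beta>::monom) + \<beta> = \<gamma> + \<gamma> \<longleftrightarrow> \<beta> = \<gamma>"
  by (metis lookup_add poly_mapping_eqI add_left_imp_eq mult_2 mult_cancel1 zero_neq_numeral)

lemma monom_split_mdeg:
  "mdeg (\<alpha>::monom) \<le> a + b \<Longrightarrow> \<exists>\<beta> \<gamma>. \<alpha> = \<beta> + \<gamma> \<and> mdeg \<beta> \<le> a \<and> mdeg \<gamma> \<le> b"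
proof (induction a arbitrary: \<alpha>)
  case 0
  then show ?case by (intro exI[of _ 0] exI[of _ \<alpha>]) simp
next
  case (Suc a)
  show ?case
  proof (cases "\<alpha> = 0")
    case False
    then obtain i where "i \<in> Poly_Mapping.keys \<alpha>" by fastforce
    then have \<alpha>: "\<alpha> = Poly_Mapping.single i 1 + (\<alpha> - Poly_Mapping.single i 1)"
      by (rule monom_remove_var)
    then have "mdeg (\<alpha> - Poly_Mapping.single i 1) \<le> a + b"
      using Suc.prems mdeg_add[of "Poly_Mapping.single i 1" "\<alpha> - Poly_Mapping.single i 1"] by simp
    then obtain \<beta> \<gamma> where "\<alpha> - Poly_Mapping.single i 1 = \<beta> + \<gamma>" "mdeg \<beta> \<le> a" "mdeg \<gamma> \<le> b"
      using Suc.IH by blast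
    then show ?thesis
      using \<alpha> by (intro exI[of _ "Poly_Mapping.single i 1 + \<beta>"] exI[of _ \<gamma>]) (simp add: mdeg_add ac_simps)
  qed (intro exI[of _ 0]; simp)
qed

lemma finite_mons: "finite (mons n d)"
proof -
  have "Poly_Mapping.lookup \<alpha> \<in> {f. \<forall>i. (i \<in> {..<n} \<longrightarrow> f i \<in> {..d}) \<and> (i \<notin> {..<n} \<longrightarrow> f i = 0)}"
    if "\<alpha> \<in> mons n d" for \<alpha>
  proof -
    have "Poly_Mapping.lookup \<alpha> i \<le> d" for i
      using that lookup_le_mdeg[of \<alpha> i] by (simp add: mons_def)
    moreover have "Poly_Mapping.lookup \<alpha> i = 0" if "i \<notin> {..<n}" for i
      using \<open>\<alpha> \<in> mons n d\<close> that by (auto simp: mons_def in_keys_iff)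
    ultimately show ?thesis by simp
  qed
  then have "finite (Poly_Mapping.lookup ` mons n d)"
    by (intro finite_subset[OF _ finite_set_of_finite_funs[of "{..<n}" "{..d}" 0]]) auto
  then show ?thesis
    by (rule finite_imageD) (simp add: inj_on_def)
qed

lemma mons_add: "mons n (a + b) = (\<lambda>(\<beta>, \<gamma>). \<beta> + \<gamma>) ` (mons n a \<times> mons n b)"
proof
  show "mons n (a + b) \<subseteq> (\<lambda>(\<beta>, \<gamma>). \<beta> + \<gamma>) ` (mons n a \<times> mons n b)"
  proof
    fix \<alpha> assume "\<alpha> \<in> mons n (a + b)"
    moreover obtain \<beta> \<gamma> where "\<alpha> = \<beta> + \<gamma>" "mdeg \<beta> \<le> a" "mdeg \<gamma> \<le> b"
      using calculation monom_split_mdeg unfolding mons_def by blast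
    ultimately show "\<alpha> \<in> (\<lambda>(\<beta>, \<gamma>). \<beta> + \<gamma>) ` (mons n a \<times> mons n b)"
      by (auto simp: mons_def keys_add_monom)
  qed
qed (auto simp: mons_def keys_add_monom mdeg_add add_mono)

lemma mons_0_vars: "mons 0 d = {0}"
  by (auto simp: mons_def)

lemma tdeg_le_iff: "tdeg p \<le> d \<longleftrightarrow> (\<forall>m\<in>Poly_Mapping.keys p. mdeg m \<le> d)"
  unfolding tdeg_def by (subst Max_le_iff) auto

lemma mdeg_le_tdeg: "m \<in> Poly_Mapping.keys p \<Longrightarrow> mdeg m \<le> tdeg p"
  using tdeg_le_iff[of p "tdeg p"] by auto

lemma tdeg_zero [simp]: "tdeg 0 = 0"
  by (simp add: tdeg_def)

lemma tdeg_add: "tdeg (p + q) \<le> max (tdeg p) (tdeg q)"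
  unfolding tdeg_le_iff using keys_add[of p q] mdeg_le_tdeg[of _ p] mdeg_le_tdeg[of _ q] by fastforce

lemma tdeg_diff: "tdeg (p - q) \<le> max (tdeg p) (tdeg q)"
  unfolding tdeg_le_iff using keys_diff[of p q] mdeg_le_tdeg[of _ p] mdeg_le_tdeg[of _ q] by fastforce

lemma tdeg_mult: "tdeg (p * q) \<le> tdeg p + tdeg q"
  unfolding tdeg_le_iff using keys_mult[of p q] mdeg_le_tdeg[of _ p] mdeg_le_tdeg[of _ q]
  by (fastforce simp: mdeg_add intro: add_mono)

lemma tdeg_sum: "(\<And>i. i \<in> A \<Longrightarrow> tdeg (f i) \<le> d) \<Longrightarrow> tdeg (sum f A) \<le> d"
proof (induction A rule: infinite_finite_induct)
  case (insert x F)
  then show ?case using tdeg_add[of "f x" "sum f F"] by fastforce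
qed simp_all

lemma tdeg_single: "tdeg (Poly_Mapping.single m c) \<le> mdeg m"
  unfolding tdeg_le_iff by simp

lemma tdeg_power: "tdeg (p ^ k) \<le> k * tdeg p"
proof (induction k)
  case (Suc k)
  then show ?case using tdeg_mult[of p "p ^ k"] by simp
qed (simp add: tdeg_def)

subsection \<open>Sums of squares and the quadratic module\<close>

lemma in_vars_add: "in_vars n p \<Longrightarrow> in_vars n q \<Longrightarrow> in_vars n (p + q)"
  unfolding in_vars_def using keys_add[of p q] by blast

lemma in_vars_mult: "in_vars n p \<Longrightarrow> in_vars n q \<Longrightarrow> in_vars n (p * q)"
  unfolding in_vars_def using keys_mult[of p q] by (force simp: keys_add_monom)

lemma in_vars_single: "Poly_Mapping.keys \<alpha> \<subseteq> {..<n} \<Longrightarrow> in_vars n (Poly_Mapping.single \<alpha> c)"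
  unfolding in_vars_def by simp

lemma SOS_zero: "0 \<in> SOS n"
  unfolding SOS_def by (auto intro!: exI[of _ "[]"])

lemma SOS_add: "s \<in> SOS n \<Longrightarrow> s' \<in> SOS n \<Longrightarrow> s + s' \<in> SOS n"
  unfolding SOS_def by (clarify, rename_tac qs qs', rule_tac x = "qs @ qs'" in exI) auto

lemma SOS_sum: "(\<And>i. i \<in> A \<Longrightarrow> f i \<in> SOS n) \<Longrightarrow> sum f A \<in> SOS n"
  by (induction A rule: infinite_finite_induct) (simp_all add: SOS_zero SOS_add)

lemma SOS_square: "in_vars n q \<Longrightarrow> q * q \<in> SOS n"
  unfolding SOS_def by (intro CollectI exI[of _ "[q]"]) simp

lemma SOS_square_mult: assumes "s \<in> SOS n" "in_vars n p" shows "p * p * s \<in> SOS n"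
proof -
  obtain qs where qs: "\<forall>q\<in>set qs. in_vars n q" "s = sum_list (map (\<lambda>q. q * q) qs)"
    using assms(1) unfolding SOS_def by blast
  have "p * p * s = sum_list (map (\<lambda>q. q * q) (map ((*) p) qs))"
    unfolding qs(2) by (induction qs) (simp_all add: algebra_simps)
  moreover have "\<forall>q\<in>set (map ((*) p) qs). in_vars n q"
    using qs(1) assms(2) in_vars_mult by auto
  ultimately show ?thesis unfolding SOS_def by blast
qed

lemma SOS_mult: assumes "s \<in> SOS n" "s' \<in> SOS n" shows "s * s' \<in> SOS n"
proof -
  obtain qs where qs: "\<forall>q\<in>set qs. in_vars n q" "s = sum_list (map (\<lambda>q. q * q) qs)"
    using assms(1) unfolding SOS_def by blast
  have "sum_list (map (\<lambda>q. q * q) qs) * s' \<in> SOS n"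
    using qs(1) by (induction qs) (simp_all add: SOS_zero SOS_add SOS_square_mult assms(2) distrib_right)
  then show ?thesis using qs(2) by simp
qed

lemma SOS_in_Qmod: "s \<in> SOS n \<Longrightarrow> tdeg s \<le> l \<Longrightarrow> s \<in> Qmod n r g l"
  unfolding Qmod_def using SOS_zero by (intro CollectI exI[of _ s] exI[of _ "\<lambda>_. 0"]) auto

lemma tdeg_Qmod:
  assumes "p \<in> Qmod n r g l"
  shows "tdeg p \<le> l"
proof -
  obtain s0 s where "tdeg s0 \<le> l" "\<forall>i\<in>{1..r}. tdeg (s i * g i) \<le> l"
      "p = s0 + (\<Sum>i=1..r. s i * g i)"
    using assms unfolding Qmod_def by blast
  then show ?thesis
    using tdeg_add[of s0 "\<Sum>i=1..r. s i * g i"] tdeg_sum[of "{1..r}" "\<lambda>i. s i * g i" l] by auto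
qed

lemma SOS_mult_Qmod:
  assumes "s \<in> SOS n" "q \<in> Qmod n r g l0" "tdeg s + l0 \<le> l"
  shows "s * q \<in> Qmod n r g l"
proof -
  obtain s0 ss where q: "s0 \<in> SOS n" "tdeg s0 \<le> l0"
      "\<forall>i\<in>{1..r}. ss i \<in> SOS n \<and> tdeg (ss i * g i) \<le> l0" "q = s0 + (\<Sum>i=1..r. ss i * g i)"
    using assms(2) unfolding Qmod_def by blast
  have "s * q = s * s0 + (\<Sum>i=1..r. (s * ss i) * g i)"
    unfolding q(4) by (simp add: distrib_left sum_distrib_left mult.assoc)
  moreover have "s * s0 \<in> SOS n" "tdeg (s * s0) \<le> l"
    using SOS_mult[OF assms(1) q(1)] tdeg_mult[of s s0] q(2) assms(3) by auto
  moreover have "s * ss i \<in> SOS n" "tdeg (s * ss i * g i) \<le> l" if "i \<in> {1..r}" for i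
  proof -
    have "ss i \<in> SOS n" "tdeg (ss i * g i) \<le> l0"
      using q(3) that by auto
    then show "s * ss i \<in> SOS n" "tdeg (s * ss i * g i) \<le> l"
      using SOS_mult[OF assms(1)] tdeg_mult[of s "ss i * g i"] assms(3) by (auto simp: mult.assoc)
  qed
  ultimately show ?thesis
    unfolding Qmod_def
    by (intro CollectI exI[of _ "s * s0"] exI[of _ "\<lambda>i. s * ss i"] conjI ballI) assumption+
qed

subsection \<open>Nonnegative combinations of squared monomials\<close>

definition sq_monomial_comb :: "nat \<Rightarrow> mpoly \<Rightarrow> bool" where
  "sq_monomial_comb n p \<longleftrightarrow> (\<forall>m\<in>Poly_Mapping.keys p.
     0 < Poly_Mapping.lookup p m \<and> (\<exists>\<gamma>. Poly_Mapping.keys \<gamma> \<subseteq> {..<n} \<and> m = \<gamma> + \<gamma>))"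

lemma sq_monomial_comb_single:
  "Poly_Mapping.keys \<gamma> \<subseteq> {..<n} \<Longrightarrow> 0 \<le> c \<Longrightarrow> sq_monomial_comb n (Poly_Mapping.single (\<gamma> + \<gamma>) c)"
  unfolding sq_monomial_comb_def by auto

lemma sq_monomial_comb_lookup_nonneg: "sq_monomial_comb n p \<Longrightarrow> 0 \<le> Poly_Mapping.lookup p m"
  unfolding sq_monomial_comb_def by (metis in_keys_iff order.refl less_imp_le)

lemma sq_monomial_comb_add:
  assumes "sq_monomial_comb n p" "sq_monomial_comb n q"
  shows "sq_monomial_comb n (p + q)"
  unfolding sq_monomial_comb_def
proof
  fix m assume m: "m \<in> Poly_Mapping.keys (p + q)"
  then have "0 < Poly_Mapping.lookup (p + q) m"
    using sq_monomial_comb_lookup_nonneg[OF assms(1), of m] sq_monomial_comb_lookup_nonneg[OF assms(2), of m]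
    by (simp add: in_keys_iff lookup_add)
  moreover have "\<exists>\<gamma>. Poly_Mapping.keys \<gamma> \<subseteq> {..<n} \<and> m = \<gamma> + \<gamma>"
    using m keys_add[of p q] assms unfolding sq_monomial_comb_def by blast
  ultimately show "0 < Poly_Mapping.lookup (p + q) m \<and> (\<exists>\<gamma>. Poly_Mapping.keys \<gamma> \<subseteq> {..<n} \<and> m = \<gamma> + \<gamma>)" ..
qed

lemma sq_monomial_comb_sum:
  "(\<And>i. i \<in> A \<Longrightarrow> sq_monomial_comb n (f i)) \<Longrightarrow> sq_monomial_comb n (sum f A)"
proof (induction A rule: infinite_finite_induct)
  case (insert x F)
  then show ?case by (simp add: sq_monomial_comb_add)
qed (simp_all add: sq_monomial_comb_def)

lemma sq_monomial_comb_mult: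
  assumes "sq_monomial_comb n p" "sq_monomial_comb n q"
  shows "sq_monomial_comb n (p * q)"
  unfolding sq_monomial_comb_def
proof
  fix m assume m: "m \<in> Poly_Mapping.keys (p * q)"
  have "0 \<le> Poly_Mapping.lookup (p * q) m"
    unfolding lookup_mult_mpoly using assms
    by (intro sum_nonneg) (simp add: when_def sq_monomial_comb_lookup_nonneg)
  then have "0 < Poly_Mapping.lookup (p * q) m"
    using m by (simp add: in_keys_iff)
  moreover obtain a b where ab: "a \<in> Poly_Mapping.keys p" "b \<in> Poly_Mapping.keys q" "m = a + b"
    using m keys_mult[of p q] by blast
  moreover obtain \<gamma> \<delta> where "Poly_Mapping.keys \<gamma> \<subseteq> {..<n}" "a = \<gamma> + \<gamma>"
      "Poly_Mapping.keys \<delta> \<subseteq> {..<n}" "b = \<delta> + \<delta>"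
    using assms ab(1,2) unfolding sq_monomial_comb_def by blast
  ultimately show "0 < Poly_Mapping.lookup (p * q) m \<and> (\<exists>\<gamma>. Poly_Mapping.keys \<gamma> \<subseteq> {..<n} \<and> m = \<gamma> + \<gamma>)"
    by (intro conjI exI[of _ "\<gamma> + \<delta>"]) (auto simp: keys_add_monom ac_simps)
qed

lemma sq_monomial_comb_imp_SOS:
  assumes "sq_monomial_comb n p"
  shows "p \<in> SOS n"
proof -
  have "Poly_Mapping.single a (Poly_Mapping.lookup p a) \<in> SOS n" if a: "a \<in> Poly_Mapping.keys p" for a
  proof -
    obtain \<gamma> where \<gamma>: "Poly_Mapping.keys \<gamma> \<subseteq> {..<n}" "a = \<gamma> + \<gamma>" and pos: "0 < Poly_Mapping.lookup p a"
      using assms a unfolding sq_monomial_comb_def by blast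
    let ?c = "sqrt (Poly_Mapping.lookup p a)"
    have "Poly_Mapping.single a (Poly_Mapping.lookup p a) = Poly_Mapping.single \<gamma> ?c * Poly_Mapping.single \<gamma> ?c"
      using pos \<gamma>(2) by (simp add: mult_single)
    then show ?thesis
      using SOS_square[OF in_vars_single[OF \<gamma>(1)]] by simp
  qed
  then show ?thesis
    using mpoly_eq_sum_single[of p] SOS_sum by metis
qed

lemma lookup_sum_single_double:
  fixes B :: "monom set"
  assumes "finite B"
  shows "Poly_Mapping.lookup (\<Sum>\<beta>\<in>B. Poly_Mapping.single (\<beta> + \<beta>) 1) m =
    (if \<exists>\<beta>\<in>B. m = \<beta> + \<beta> then 1 else (0::real))"
proof (cases "\<exists>\<beta>\<in>B. m = \<beta> + \<beta>")
  case True
  then obtain \<beta>0 where "\<beta>0 \<in> B" "m = \<beta>0 + \<beta>0" by blast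
  then have "(\<Sum>\<beta>\<in>B. (1::real) when \<beta> + \<beta> = m) = (\<Sum>\<beta>\<in>B. if \<beta> = \<beta>0 then 1 else 0)"
    by (intro sum.cong) (auto simp: when_def)
  then show ?thesis
    using True \<open>\<beta>0 \<in> B\<close> assms by (simp add: lookup_sum lookup_single)
qed (auto simp: lookup_sum lookup_single when_def intro!: sum.neutral)

lemma sq_monomial_comb_diff_squares:
  assumes p: "sq_monomial_comb n p" and "finite B"
    and ge1: "\<And>\<beta>. \<beta> \<in> B \<Longrightarrow> 1 \<le> Poly_Mapping.lookup p (\<beta> + \<beta>)"
  shows "sq_monomial_comb n (p - (\<Sum>\<beta>\<in>B. Poly_Mapping.single (\<beta> + \<beta>) 1))"
  unfolding sq_monomial_comb_def
proof
  fix m assume m: "m \<in> Poly_Mapping.keys (p - (\<Sum>\<beta>\<in>B. Poly_Mapping.single (\<beta> + \<beta>) 1))"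
  let ?d = "Poly_Mapping.lookup (p - (\<Sum>\<beta>\<in>B. Poly_Mapping.single (\<beta> + \<beta>) 1)) m"
  have d: "?d = Poly_Mapping.lookup p m - (if \<exists>\<beta>\<in>B. m = \<beta> + \<beta> then 1 else 0)"
    by (simp add: lookup_minus lookup_sum_single_double[OF \<open>finite B\<close>])
  then have "0 \<le> ?d"
    using ge1 sq_monomial_comb_lookup_nonneg[OF p, of m] by auto
  then have "0 < ?d"
    using m by (simp add: in_keys_iff)
  moreover have "m \<in> Poly_Mapping.keys p"
    using d m by (auto simp: in_keys_iff split: if_splits dest!: ge1)
  ultimately show "0 < ?d \<and> (\<exists>\<gamma>. Poly_Mapping.keys \<gamma> \<subseteq> {..<n} \<and> m = \<gamma> + \<gamma>)"
    using p unfolding sq_monomial_comb_def by blast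
qed

subsection \<open>Powers of the squared norm\<close>

lemma var_mult_var: "var i * var i = Poly_Mapping.single (Poly_Mapping.single i 1 + Poly_Mapping.single i 1) 1"
  by (simp add: var_def mult_single)

lemma sq_monomial_comb_sq_norm_power: "sq_monomial_comb n (sq_norm_poly n ^ k)"
proof (induction k)
  case 0
  then show ?case using sq_monomial_comb_single[of 0 n 1] by simp
next
  case (Suc k)
  have "sq_monomial_comb n (sq_norm_poly n)"
    unfolding sq_norm_poly_def var_mult_var by (intro sq_monomial_comb_sum sq_monomial_comb_single) auto
  then show ?case using Suc by (simp add: sq_monomial_comb_mult)
qed

lemma tdeg_sq_norm_power: "tdeg (sq_norm_poly n ^ k) \<le> 2 * k"
proof -
  have "tdeg (sq_norm_poly n) \<le> 2"
    unfolding sq_norm_poly_def var_mult_var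
    by (intro tdeg_sum order_trans[OF tdeg_single]) (simp add: mdeg_add)
  then show ?thesis
    using tdeg_power[of "sq_norm_poly n" k] by (metis mult.commute mult_le_mono2 order_trans)
qed

lemma lookup_sq_norm_power_double:
  "Poly_Mapping.keys \<beta> \<subseteq> {..<n} \<Longrightarrow> 1 \<le> Poly_Mapping.lookup (sq_norm_poly n ^ mdeg \<beta>) (\<beta> + \<beta>)"
proof (induction "mdeg \<beta>" arbitrary: \<beta>)
  case 0
  then show ?case by (simp add: mdeg_eq_0_iff)
next
  case (Suc k)
  then obtain i where i: "i \<in> Poly_Mapping.keys \<beta>"
    by (metis mdeg_eq_0_iff keys_eq_empty ex_in_conv nat.distinct(1))
  define \<beta>' where "\<beta>' = \<beta> - Poly_Mapping.single i 1"
  have \<beta>: "\<beta> = Poly_Mapping.single i 1 + \<beta>'"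
    unfolding \<beta>'_def using i by (rule monom_remove_var)
  then have "mdeg \<beta>' = k" "Poly_Mapping.keys \<beta>' \<subseteq> {..<n}" "i < n"
    using Suc.hyps(2) Suc.prems i mdeg_add[of "Poly_Mapping.single i 1" \<beta>'] keys_add_monom
    by auto
  let ?P = "sq_norm_poly n ^ k"
  have comb: "sq_monomial_comb n (var j * var j * ?P)" if "j < n" for j
    unfolding var_mult_var using that
    by (intro sq_monomial_comb_mult sq_monomial_comb_single sq_monomial_comb_sq_norm_power) auto
  have "1 \<le> Poly_Mapping.lookup ?P (\<beta>' + \<beta>')"
    using Suc.hyps(1) \<open>mdeg \<beta>' = k\<close> \<open>Poly_Mapping.keys \<beta>' \<subseteq> {..<n}\<close> by blast
  also have "\<dots> = Poly_Mapping.lookup (var i * var i * ?P) (\<beta> + \<beta>)"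
    using lookup_single_mult[of "Poly_Mapping.single i 1 + Poly_Mapping.single i 1" 1 ?P "\<beta>' + \<beta>'"]
    by (simp add: var_mult_var \<beta> ac_simps)
  also have "\<dots> \<le> (\<Sum>j<n. Poly_Mapping.lookup (var j * var j * ?P) (\<beta> + \<beta>))"
    using \<open>i < n\<close> comb by (intro member_le_sum) (auto intro: sq_monomial_comb_lookup_nonneg)
  also have "\<dots> = Poly_Mapping.lookup (sq_norm_poly n ^ mdeg \<beta>) (\<beta> + \<beta>)"
    by (simp add: \<open>Suc k = mdeg \<beta>\<close>[symmetric] sq_norm_poly_def sum_distrib_right lookup_sum)
  finally show ?case .
qed

lemma tdeg_const_minus_sq_norm:
  assumes "1 \<le> n"
  shows "2 \<le> tdeg (const c - sq_norm_poly n)"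
proof -
  let ?\<beta> = "Poly_Mapping.single 0 1 :: monom"
  have mdeg: "mdeg (?\<beta> + ?\<beta>) = 2"
    by (simp add: mdeg_add)
  then have "?\<beta> + ?\<beta> \<noteq> 0"
    by (metis mdeg_zero zero_neq_numeral)
  moreover have "1 \<le> Poly_Mapping.lookup (sq_norm_poly n) (?\<beta> + ?\<beta>)"
    using lookup_sq_norm_power_double[of ?\<beta> n] assms by simp
  ultimately have "?\<beta> + ?\<beta> \<in> Poly_Mapping.keys (const c - sq_norm_poly n)"
    by (auto simp: in_keys_iff lookup_minus const_def lookup_single when_def)
  then show ?thesis
    using mdeg_le_tdeg mdeg by metis
qed

subsection \<open>Functionals nonnegative on sums of squares\<close>

definition sos_nonneg :: "nat \<Rightarrow> nat \<Rightarrow> (monom \<Rightarrow> real) \<Rightarrow> bool" where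
  "sos_nonneg n l L \<longleftrightarrow> (\<forall>s\<in>SOS n. tdeg s \<le> l \<longrightarrow> 0 \<le> apply_lf L s)"

lemma Lset1_sos_nonneg: "L \<in> Lset1 n r g l \<Longrightarrow> sos_nonneg n l L"
  unfolding Lset1_def sos_nonneg_def using SOS_in_Qmod by blast

lemma Lset1_at_0: "L \<in> Lset1 n r g l \<Longrightarrow> L 0 = 1"
  unfolding Lset1_def by (simp add: apply_lf_def)

lemma sos_nonneg_square:
  assumes "sos_nonneg n l L" "in_vars n q" "2 * tdeg q \<le> l"
  shows "0 \<le> apply_lf L (q * q)"
  using assms tdeg_mult[of q q] SOS_square unfolding sos_nonneg_def by fastforce

lemma quadratic_nonneg_discrim:
  fixes a b c :: real
  assumes nonneg: "\<And>x. 0 \<le> a * x\<^sup>2 + 2 * b * x + c" and "0 \<le> a"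
  shows "b\<^sup>2 \<le> a * c"
proof (cases "a = 0")
  case True
  have "b = 0"
  proof (rule ccontr)
    assume "b \<noteq> 0"
    then have "2 * b * (- (c + 1) / (2 * b)) + c = -1" by (simp add: field_simps)
    then show False using nonneg[of "- (c + 1) / (2 * b)"] True by simp
  qed
  then show ?thesis using True by simp
next
  case False
  then have "0 < a" using \<open>0 \<le> a\<close> by simp
  have "0 \<le> a * (- b / a)\<^sup>2 + 2 * b * (- b / a) + c"
    by (rule nonneg)
  also have "\<dots> = c - b\<^sup>2 / a"
    using \<open>0 < a\<close> by (simp add: field_simps power2_eq_square)
  finally show ?thesis
    using \<open>0 < a\<close> by (simp add: divide_le_eq mult.commute)
qed

lemma moment_double_nonneg:
  assumes "sos_nonneg n l L" "\<beta> \<in> mons n t" "2 * t \<le> l"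
  shows "0 \<le> L (\<beta> + \<beta>)"
proof -
  have "0 \<le> apply_lf L (Poly_Mapping.single \<beta> 1 * Poly_Mapping.single \<beta> 1)"
    using assms tdeg_single[of \<beta> 1]
    by (intro sos_nonneg_square in_vars_single) (auto simp: mons_def)
  then show ?thesis by (simp add: mult_single apply_lf_single)
qed

lemma moment_cauchy_schwarz:
  assumes L: "sos_nonneg n l L" and "\<beta> \<in> mons n t" "\<gamma> \<in> mons n t" "2 * t \<le> l"
  shows "(L (\<beta> + \<gamma>))\<^sup>2 \<le> L (\<beta> + \<beta>) * L (\<gamma> + \<gamma>)"
proof (rule quadratic_nonneg_discrim)
  fix x
  let ?q = "Poly_Mapping.single \<beta> x + Poly_Mapping.single \<gamma> 1 :: mpoly"
  have "tdeg ?q \<le> t"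
    using assms(2,3) order_trans[OF tdeg_add] tdeg_single[of \<beta> x] tdeg_single[of \<gamma> 1]
    by (fastforce simp: mons_def)
  then have "0 \<le> apply_lf L (?q * ?q)"
    using assms by (intro sos_nonneg_square[OF L] in_vars_add in_vars_single) (auto simp: mons_def)
  also have "?q * ?q = Poly_Mapping.single (\<beta> + \<beta>) (x * x) + Poly_Mapping.single (\<beta> + \<gamma>) x
      + Poly_Mapping.single (\<beta> + \<gamma>) x + Poly_Mapping.single (\<gamma> + \<gamma>) 1"
    by (simp add: algebra_simps mult_single)
  finally show "0 \<le> L (\<beta> + \<beta>) * x\<^sup>2 + 2 * L (\<beta> + \<gamma>) * x + L (\<gamma> + \<gamma>)"
    unfolding apply_lf_add apply_lf_single by (simp add: power2_eq_square algebra_simps)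
qed (rule moment_double_nonneg[OF assms(1,2,4)])

lemma trunc_norm_le_diagonal_moments:
  assumes L: "sos_nonneg n l L" and "2 * t \<le> l"
  shows "trunc_norm n (2 * t) L \<le> (\<Sum>\<beta>\<in>mons n t. L (\<beta> + \<beta>))"
proof -
  let ?M = "mons n t"
  define T where "T = (\<Sum>\<beta>\<in>?M. L (\<beta> + \<beta>))"
  have "(\<Sum>\<alpha>\<in>mons n (2 * t). (L \<alpha>)\<^sup>2) = (\<Sum>\<alpha>\<in>(\<lambda>(\<beta>, \<gamma>). \<beta> + \<gamma>) ` (?M \<times> ?M). (L \<alpha>)\<^sup>2)"
    by (simp add: mult_2 mons_add)
  also have "\<dots> \<le> (\<Sum>(\<beta>, \<gamma>)\<in>?M \<times> ?M. (L (\<beta> + \<gamma>))\<^sup>2)"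
    using sum_image_le[of "?M \<times> ?M" "\<lambda>\<alpha>. (L \<alpha>)\<^sup>2" "\<lambda>(\<beta>, \<gamma>). \<beta> + \<gamma>"]
    by (simp add: finite_mons comp_def case_prod_unfold)
  also have "\<dots> \<le> (\<Sum>(\<beta>, \<gamma>)\<in>?M \<times> ?M. L (\<beta> + \<beta>) * L (\<gamma> + \<gamma>))"
    using moment_cauchy_schwarz[OF L _ _ assms(2)] by (intro sum_mono) auto
  also have "\<dots> = T\<^sup>2"
    by (simp add: T_def sum_product sum.cartesian_product power2_eq_square case_prod_unfold)
  finally have "trunc_norm n (2 * t) L \<le> sqrt (T\<^sup>2)"
    unfolding trunc_norm_def by (rule real_sqrt_le_mono)
  moreover have "0 \<le> T"
    unfolding T_def using moment_double_nonneg[OF L _ assms(2)] by (intro sum_nonneg)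
  ultimately show ?thesis
    by (simp add: T_def)
qed

lemma diagonal_moments_le_sq_norm_powers:
  assumes L: "sos_nonneg n l L" and "2 * t \<le> l"
  shows "(\<Sum>\<beta>\<in>mons n t. L (\<beta> + \<beta>)) \<le> (\<Sum>k=0..t. apply_lf L (sq_norm_poly n ^ k))"
proof -
  define p where "p = (\<Sum>k=0..t. sq_norm_poly n ^ k)"
  define q where "q = (\<Sum>\<beta>\<in>mons n t. Poly_Mapping.single (\<beta> + \<beta>) (1::real))"
  have p: "sq_monomial_comb n p"
    unfolding p_def by (intro sq_monomial_comb_sum sq_monomial_comb_sq_norm_power)
  have "1 \<le> Poly_Mapping.lookup p (\<beta> + \<beta>)" if "\<beta> \<in> mons n t" for \<beta>
  proof -
    have "1 \<le> Poly_Mapping.lookup (sq_norm_poly n ^ mdeg \<beta>) (\<beta> + \<beta>)"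
      using that lookup_sq_norm_power_double by (simp add: mons_def)
    also have "\<dots> \<le> Poly_Mapping.lookup p (\<beta> + \<beta>)"
      unfolding p_def lookup_sum using that
      by (intro member_le_sum) (auto simp: mons_def sq_monomial_comb_lookup_nonneg[OF sq_monomial_comb_sq_norm_power])
    finally show ?thesis .
  qed
  then have "p - q \<in> SOS n"
    unfolding q_def by (intro sq_monomial_comb_imp_SOS sq_monomial_comb_diff_squares p finite_mons)
  moreover have "tdeg (p - q) \<le> l"
  proof -
    have "tdeg p \<le> 2 * t"
      unfolding p_def
    proof (rule tdeg_sum)
      fix k assume "k \<in> {0..t}"
      then show "tdeg (sq_norm_poly n ^ k) \<le> 2 * t"
        using tdeg_sq_norm_power[of n k] by simp
    qed
    moreover have "tdeg q \<le> 2 * t"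
      unfolding q_def
    proof (rule tdeg_sum)
      fix \<beta> assume "\<beta> \<in> mons n t"
      then show "tdeg (Poly_Mapping.single (\<beta> + \<beta>) (1::real)) \<le> 2 * t"
        using tdeg_single[of "\<beta> + \<beta>" 1] by (simp add: mons_def mdeg_add)
    qed
    ultimately show ?thesis
      using tdeg_diff[of p q] assms(2) by linarith
  qed
  ultimately have "0 \<le> apply_lf L (p - q)"
    using L unfolding sos_nonneg_def by blast
  then show ?thesis
    by (simp add: p_def q_def apply_lf_diff apply_lf_sum apply_lf_single)
qed

lemma apply_lf_sq_norm_power_le:
  assumes L: "L \<in> Lset1 n r g l"
    and arch: "const (r0\<^sup>2) - sq_norm_poly n \<in> Qmod n r g l0"
    and "2 * k + l0 \<le> l + 2"
  shows "apply_lf L (sq_norm_poly n ^ k) \<le> r0 ^ (2 * k)"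
  using assms(3)
proof (induction k)
  case 0
  then show ?case using L by (simp add: Lset1_def)
next
  case (Suc k)
  let ?P = "sq_norm_poly n ^ k"
  have "?P * (const (r0\<^sup>2) - sq_norm_poly n) \<in> Qmod n r g l"
    using Suc.prems tdeg_sq_norm_power[of n k]
    by (intro SOS_mult_Qmod[OF sq_monomial_comb_imp_SOS[OF sq_monomial_comb_sq_norm_power] arch]) simp
  then have "0 \<le> apply_lf L (?P * (const (r0\<^sup>2) - sq_norm_poly n))"
    using L unfolding Lset1_def by blast
  also have "?P * (const (r0\<^sup>2) - sq_norm_poly n) = const (r0\<^sup>2) * ?P - sq_norm_poly n ^ Suc k"
    by (simp add: algebra_simps)
  finally have "apply_lf L (sq_norm_poly n ^ Suc k) \<le> r0\<^sup>2 * apply_lf L ?P"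
    by (simp add: apply_lf_diff apply_lf_const_mult)
  also have "\<dots> \<le> r0\<^sup>2 * r0 ^ (2 * k)"
    using Suc by (intro mult_left_mono) auto
  also have "\<dots> = r0 ^ (2 * Suc k)"
    by (simp add: power_mult power2_eq_square)
  finally show ?case .
qed

lemma trunc_norm_le_geometric_sum:
  assumes "1 \<le> n" and L: "L \<in> Lset1 n r g l"
    and arch: "const (r0\<^sup>2) - sq_norm_poly n \<in> Qmod n r g l0"
    and deg: "2 * int t - 2 + int l0 \<le> int l"
  shows "trunc_norm n (2 * t) L \<le> (\<Sum>k=0..t. r0 ^ (2 * k))"
proof -
  have "2 \<le> tdeg (const (r0\<^sup>2) - sq_norm_poly n)"
    using \<open>1 \<le> n\<close> by (rule tdeg_const_minus_sq_norm)
  then have "2 \<le> l0"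
    using tdeg_Qmod[OF arch] by linarith
  then have "2 * t \<le> l"
    using deg by linarith
  have deg_k: "2 * k + l0 \<le> l + 2" if "k \<le> t" for k
    using deg that by linarith
  have "trunc_norm n (2 * t) L \<le> (\<Sum>\<beta>\<in>mons n t. L (\<beta> + \<beta>))"
    using trunc_norm_le_diagonal_moments[OF Lset1_sos_nonneg[OF L] \<open>2 * t \<le> l\<close>] .
  also have "\<dots> \<le> (\<Sum>k=0..t. apply_lf L (sq_norm_poly n ^ k))"
    using diagonal_moments_le_sq_norm_powers[OF Lset1_sos_nonneg[OF L] \<open>2 * t \<le> l\<close>] .
  also have "\<dots> \<le> (\<Sum>k=0..t. r0 ^ (2 * k))"
    using apply_lf_sq_norm_power_le[OF L arch deg_k] by (intro sum_mono) simp
  finally show ?thesis .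
qed

theorem mainTheorem16:
  fixes n r l0 :: nat and g :: "nat \<Rightarrow> mpoly" and r0 :: real
  assumes g_vars: "\<forall>i\<in>{1..r}. in_vars n (g i)"
    and r0_pos: "r0 > 0"
    and arch: "const (r0\<^sup>2) - sq_norm_poly n \<in> Qmod n r g l0"
  shows "\<forall>t l. int l \<ge> 2 * int t - 2 + int l0 \<longrightarrow>
           (\<forall>L\<in>Lset1 n r g l.
              trunc_norm n (2 * t) L \<le> sqrt (real ((n + t) choose t)) * (\<Sum>k=0..t. r0 ^ (2 * k)))"
proof (intro allI impI ballI)
  fix t l L
  assume deg: "2 * int t - 2 + int l0 \<le> int l" and L: "L \<in> Lset1 n r g l"
  let ?R = "\<Sum>k=0..t. r0 ^ (2 * k)"
  have "1 \<le> ?R"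
    using member_le_sum[of 0 "{0..t}" "\<lambda>k. r0 ^ (2 * k)"] by (simp add: power_mult)
  have "trunc_norm n (2 * t) L \<le> ?R"
  proof (cases "n = 0")
    case True
    then show ?thesis
      using \<open>1 \<le> ?R\<close> by (simp add: trunc_norm_def mons_0_vars Lset1_at_0[OF L])
  next
    case False
    then show ?thesis
      using trunc_norm_le_geometric_sum[OF _ L arch deg] by simp
  qed
  also have "?R \<le> sqrt (real ((n + t) choose t)) * ?R"
    using mult_right_mono[of 1 "sqrt (real ((n + t) choose t))" ?R] \<open>1 \<le> ?R\<close>
    by (simp add: Suc_leI)
  finally show "trunc_norm n (2 * t) L \<le> sqrt (real ((n + t) choose t)) * ?R" .
qed

end
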